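(* Let $1>\delta_1>\delta_2\ge0$ with $\delta_2\le\frac12$. Let $\xi_0^-$ and $\eta_0$ be two boundary configurations for the S6V model with $\xi_0^-\ge\eta_0$, and let $v_0$ be a boundary vertex such that neither $\xi_0^-$ nor $\eta_0$ has an arrow incoming from $v_0$. Then there is a coupling of the S6V models $\xi^-$ and $\eta$ (with boundary data $\xi_0^-$, $\eta_0$), together with their second class particles $Q_{\xi^-}$ and $Q_\eta$ started at $v_0$, such that almost surely, for every $n$, $Q_{\xi^-}$ intersects the line $\{(x,y):x+y=n\}$ weakly to the southeast of the point where $Q_\eta$ intersects it.
   Context: S6V model: vertices $(i,j)\in\mathbb{Z}_{>0}^2$ with incoming edges from the left and from below and outgoing edges to the right and upward. Boundary vertices are $(0,j)$, $j\ge1$, and $(i,0)$, $i\ge1$; boundary data specify which edges $(0,j)\to(1,j)$ and $(i,0)\to(i,1)$ carry an incoming arrow ("arrow incoming from" the corresponding boundary vertex). Vertices are sampled on antidiagonals $i+j=n$ successively: none in gives none out; two in gives both out; a single arrow from below exits up with probability $\delta_1$, right with probability $1-\delta_1$; a single arrow from the left exits right with probability $\delta_2$, up with probability $1-\delta_2$. For boundary configurations, $\xi_0\ge\eta_0$ means every boundary arrow of $\eta_0$ is also present in $\xi_0$. Second class particle: given boundary data $\xi_0$ with no arrow from boundary vertex $v_0$, let $\xi_0^+$ be $\xi_0$ with an arrow added from $v_0$; sample both models with the basic coupling (at each vertex use the same Bernoulli($\delta_1$) variable to decide a lone vertically-entering arrow and the same Bernoulli($\delta_2$) variable to decide a lone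 horizontally-entering arrow). Then the $\xi_0^+$ configuration dominates the $\xi_0$ configuration edgewise, and the edges present in the former but not the latter form a single up-right path $Q$ from $v_0$, the second class particle of the S6V model with boundary data $\xi_0$. *)

theory Defs
  imports "HOL-Probability.Probability"
begin

text \<open>Boundary vertices: (0,j) with j \<ge> 1 and (i,0) with i \<ge> 1.
  A boundary configuration is the set of boundary vertices from which an arrow
  is incoming (along (0,j)->(1,j), resp. (i,0)->(i,1)).\<close>

definition boundary_vertices :: "(nat \<times> nat) set" where
  "boundary_vertices = {(0,j) | j. j \<ge> 1} \<union> {(i,0) | i. i \<ge> 1}"

definition boundary_config :: "(nat \<times> nat) set \<Rightarrow> bool" where
  "boundary_config B \<longleftrightarrow> B \<subseteq> boundary_vertices"

text \<open>Randomness (b1,b2): b1 ~ Bernoulli(delta1) decides a lone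
  arrow entering from below (exits up iff b1), b2 ~ Bernoulli(delta2) decides a lone
  arrow entering from the left (exits right iff b2).
  Arguments: l = arrow incoming from the left, d = arrow incoming from below.
  Result: (arrow out to the right, arrow out upward).\<close>

fun s6v_rule :: "bool \<times> bool \<Rightarrow> bool \<Rightarrow> bool \<Rightarrow> bool \<times> bool" where
  "s6v_rule (b1, b2) l d =
     (if l \<and> d then (True, True)
      else if d then (\<not> b1, b1)
      else if l then (b2, \<not> b2)
      else (False, False))"

text \<open>Outgoing arrows (right, up) at vertex (i,j), i,j \<ge> 1, given boundary data B and
  the randomness field \<omega>. Junk value (False,False) when i = 0 or j = 0.\<close>

function s6v_out :: "(nat \<times> nat) set \<Rightarrow> (nat \<times> nat \<Rightarrow> bool \<times> bool) \<Rightarrow> nat \<times> nat \<Rightarrow> bool \<times> bool" where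
  "s6v_out B \<omega> (i, j) =
     (if i = 0 \<or> j = 0 then (False, False)
      else s6v_rule (\<omega> (i, j))
             (if i = 1 then (0, j) \<in> B else fst (s6v_out B \<omega> (i - 1, j)))
             (if j = 1 then (i, 0) \<in> B else snd (s6v_out B \<omega> (i, j - 1))))"
  by pat_completeness auto
termination
  by (relation "Wellfounded.measure (\<lambda>(B, \<omega>, (i, j)). i + j)") auto

definition s6v_edges :: "(nat \<times> nat) set \<Rightarrow> (nat \<times> nat \<Rightarrow> bool \<times> bool) \<Rightarrow> ((nat \<times> nat) \<times> (nat \<times> nat)) set" where
  "s6v_edges B c =
     {((0, j), (1, j)) | j. (0, j) \<in> B} \<union> {((i, 0), (i, 1)) | i. (i, 0) \<in> B}
     \<union> {((i, j), (i + 1, j)) | i j. i \<ge> 1 \<and> j \<ge> 1 \<and> fst (c (i, j))}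
     \<union> {((i, j), (i, j + 1)) | i j. i \<ge> 1 \<and> j \<ge> 1 \<and> snd (c (i, j))}"

text \<open>Vertices of the second class particle path Q: endpoints of edges present in the
  configuration (B', c') (the one with the extra boundary arrow) but not in (B, c).\<close>

definition scp_vertices :: "(nat \<times> nat) set \<Rightarrow> (nat \<times> nat \<Rightarrow> bool \<times> bool)
    \<Rightarrow> (nat \<times> nat) set \<Rightarrow> (nat \<times> nat \<Rightarrow> bool \<times> bool) \<Rightarrow> (nat \<times> nat) set" where
  "scp_vertices B c B' c' = {u. \<exists>e \<in> s6v_edges B' c' - s6v_edges B c. u = fst e \<or> u = snd e}"

definition rand_space :: "real \<Rightarrow> real \<Rightarrow> (nat \<times> nat \<Rightarrow> bool \<times> bool) measure" where
  "rand_space \<delta>1 \<delta>2 =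
     PiM UNIV (\<lambda>_. measure_pmf (pair_pmf (bernoulli_pmf \<delta>1) (bernoulli_pmf \<delta>2)))"

definition cfg_space :: "(nat \<times> nat \<Rightarrow> bool \<times> bool) measure" where
  "cfg_space = PiM UNIV (\<lambda>_. count_space UNIV)"

definition basic_coupling :: "real \<Rightarrow> real \<Rightarrow> (nat \<times> nat) set \<Rightarrow> (nat \<times> nat) set
    \<Rightarrow> ((nat \<times> nat \<Rightarrow> bool \<times> bool) \<times> (nat \<times> nat \<Rightarrow> bool \<times> bool)) measure" where
  "basic_coupling \<delta>1 \<delta>2 B B' =
     distr (rand_space \<delta>1 \<delta>2) (cfg_space \<Otimes>\<^sub>M cfg_space) (\<lambda>\<omega>. (s6v_out B \<omega>, s6v_out B' \<omega>))"

end

(*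
  All four configurations are driven by one i.i.d. field of seeds, seven independent coins per
  vertex. The pair (xi, xi') reads the first two coins as its Bernoulli(delta1) and
  Bernoulli(delta2) variables. The pair (eta, eta') turns the seed into its two coins by one of
  four rules, chosen from the arrows already entering the vertex in all four configurations.
  Each rule produces a Bernoulli(delta1) x Bernoulli(delta2) pair and the choice only looks at
  earlier antidiagonals, so the coins of eta are again i.i.d. and (eta, eta') is a basic
  coupling. The rules keep eta below xi and eta' below xi' edgewise, and forbid that at a vertex
  carrying both second class particles the one of xi turns up while the one of eta turns right.
  Since a second class particle leaves every antidiagonal through a single edge, induction over
  the antidiagonals keeps the particle of xi weakly to the southeast of that of eta.
*)
theory Submission
  imports Defs
begin

section \<open>Adaptive resampling of product measures\<close>

lemma map_pmf_pair_pmf_eq_bind: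
  "map_pmf (\<lambda>(y, f). G f y) (pair_pmf q Q) = bind_pmf Q (\<lambda>f. map_pmf (G f) q)"
  unfolding pair_pmf_def map_pmf_def bind_assoc_pmf bind_return_pmf by (subst bind_commute_pmf) simp

lemma sets_PiM_pmf_finite:
  fixes q :: "'x::finite pmf"
  assumes K: "finite K" and S: "S \<subseteq> space (PiM K (\<lambda>_. measure_pmf q))"
  shows "S \<in> sets (PiM K (\<lambda>_. measure_pmf q))"
proof -
  have space: "space (PiM K (\<lambda>_. measure_pmf q)) = PiE K (\<lambda>_. UNIV)"
    by (simp add: space_PiM)
  have "finite (PiE K (\<lambda>_. UNIV :: 'x set))"
    by (rule finite_PiE) (auto simp: K)
  then have "finite S"
    using S space by (metis finite_subset)
  have singleton: "PiE K (\<lambda>i. {y i}) = {y}" if "y \<in> PiE K (\<lambda>_. UNIV)" for y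
  proof (rule set_eqI)
    show "x \<in> PiE K (\<lambda>i. {y i}) \<longleftrightarrow> x \<in> {y}" for x
      using that by (auto simp: PiE_iff extensional_def fun_eq_iff)
  qed
  have "S = (\<Union>y\<in>S. {y})"
    by auto
  also have "\<dots> = (\<Union>y\<in>S. PiE K (\<lambda>i. {y i}))"
    using S unfolding space by (intro SUP_cong refl singleton[symmetric]) auto
  also have "\<dots> \<in> sets (PiM K (\<lambda>_. measure_pmf q))"
    using \<open>finite S\<close> K by (intro sets.finite_UN ballI sets_PiM_I_finite) auto
  finally show ?thesis .
qed

lemma measurable_PiM_pmf_finite_dependence:
  fixes q :: "'x::finite pmf" and f :: "('i \<Rightarrow> 'x) \<Rightarrow> 'b"
  assumes K: "finite K" and dep: "\<And>x y. (\<And>w. w \<in> K \<Longrightarrow> x w = y w) \<Longrightarrow> f x = f y"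
  shows "f \<in> measurable (PiM UNIV (\<lambda>_. measure_pmf q)) (count_space UNIV)"
proof -
  have "(\<lambda>x. restrict x K) \<in> measurable (PiM UNIV (\<lambda>_. measure_pmf q)) (PiM K (\<lambda>_. measure_pmf q))"
    by (rule measurable_restrict_subset) auto
  moreover have "f \<in> measurable (PiM K (\<lambda>_. measure_pmf q)) (count_space UNIV)"
    unfolding measurable_def by (auto intro: sets_PiM_pmf_finite[OF K])
  ultimately have "(\<lambda>x. f (restrict x K)) \<in> measurable (PiM UNIV (\<lambda>_. measure_pmf q)) (count_space UNIV)"
    by measurable
  moreover have "f (restrict x K) = f x" for x
    by (rule dep) auto
  ultimately show ?thesis
    by simp
qed

lemma emeasure_PiM_pmf_eq_Pi_pmf:
  fixes q :: "'x pmf" and L :: "'i set"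
  assumes L: "finite L" and E: "E \<in> sets (PiM L (\<lambda>_. measure_pmf q))"
  shows "emeasure (PiM L (\<lambda>_. measure_pmf q)) E = emeasure (measure_pmf (Pi_pmf L undefined (\<lambda>_. q))) E"
proof -
  interpret product_prob_space "\<lambda>_::'i. measure_pmf q" L
    by (intro product_prob_spaceI) (simp add: measure_pmf.prob_space_axioms)
  let ?P = "measure_pmf (Pi_pmf L undefined (\<lambda>_. q))"
  let ?D = "distr ?P (PiM L (\<lambda>_. measure_pmf q)) (\<lambda>x. restrict x L)"
  have restrict_id: "x \<in> set_pmf (Pi_pmf L undefined (\<lambda>_. q)) \<Longrightarrow> restrict x L = x" for x
    using set_Pi_pmf_subset[OF L, of undefined "\<lambda>_. q"] by (auto simp: fun_eq_iff)
  have "?D = PiM L (\<lambda>_. measure_pmf q)"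
  proof (rule PiM_eqI[OF L])
    fix A assume "\<And>i. i \<in> L \<Longrightarrow> A i \<in> sets (measure_pmf q)"
    have "emeasure ?D (PiE L A) = emeasure ?P ((\<lambda>x. restrict x L) -` PiE L A)"
      by (subst emeasure_distr) (auto intro!: sets_PiM_I_finite L simp: space_PiM)
    also have "(\<lambda>x. restrict x L) -` PiE L A = Pi L A"
      by (auto simp: PiE_def Pi_def)
    also have "emeasure ?P (Pi L A) = (\<Prod>i\<in>L. emeasure (measure_pmf q) (A i))"
      by (simp add: measure_pmf.emeasure_eq_measure measure_Pi_pmf_Pi L prod_ennreal)
    finally show "emeasure ?D (PiE L A) = (\<Prod>i\<in>L. emeasure (measure_pmf q) (A i))" .
  qed simp
  then have "emeasure (PiM L (\<lambda>_. measure_pmf q)) E = emeasure ?D E"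
    by simp
  also have "\<dots> = emeasure ?P ((\<lambda>x. restrict x L) -` E)"
    using E by (subst emeasure_distr) (auto simp: space_PiM)
  also have "\<dots> = emeasure ?P E"
    using restrict_id by (subst (1 2) emeasure_Int_set_pmf[symmetric]) (auto intro!: arg_cong[where f = "emeasure ?P"])
  finally show ?thesis .
qed

lemma emeasure_PiM_pmf_restrict_preimage:
  fixes q :: "'x pmf" and L :: "'i set"
  assumes L: "finite L" and E: "E \<in> sets (PiM L (\<lambda>_. measure_pmf q))"
  shows "emeasure (PiM UNIV (\<lambda>_. measure_pmf q))
      ((\<lambda>x. restrict x L) -` E \<inter> space (PiM UNIV (\<lambda>_. measure_pmf q)))
    = emeasure (measure_pmf (Pi_pmf L undefined (\<lambda>_. q))) E"
proof -
  interpret product_prob_space "\<lambda>_::'i. measure_pmf q" UNIV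
    by (intro product_prob_spaceI) (simp add: measure_pmf.prob_space_axioms)
  have "emeasure (PiM UNIV (\<lambda>_. measure_pmf q))
      ((\<lambda>x. restrict x L) -` E \<inter> space (PiM UNIV (\<lambda>_. measure_pmf q)))
    = emeasure (distr (PiM UNIV (\<lambda>_. measure_pmf q)) (PiM L (\<lambda>_. measure_pmf q)) (\<lambda>x. restrict x L)) E"
    using E by (intro emeasure_distr[symmetric] measurable_restrict_subset) auto
  also have "\<dots> = emeasure (PiM L (\<lambda>_. measure_pmf q)) E"
    using L by (simp add: distr_PiM_restrict_finite)
  also have "\<dots> = emeasure (measure_pmf (Pi_pmf L undefined (\<lambda>_. q))) E"
    by (rule emeasure_PiM_pmf_eq_Pi_pmf[OF L E])
  finally show ?thesis .
qed

definition adaptive_map :: "('i \<Rightarrow> ('i \<Rightarrow> 'x) \<Rightarrow> 's) \<Rightarrow> ('s \<Rightarrow> 'x \<Rightarrow> 'y) \<Rightarrow> ('i \<Rightarrow> 'x) \<Rightarrow> 'i \<Rightarrow> 'y" where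
  "adaptive_map st h x v = h (st v x) (x v)"

locale adaptive_resampling =
  fixes rank :: "'i \<Rightarrow> nat" and st :: "'i \<Rightarrow> ('i \<Rightarrow> 'x::finite) \<Rightarrow> 's"
    and h :: "'s \<Rightarrow> 'x \<Rightarrow> 'y" and q :: "'x pmf" and p :: "'y pmf"
  assumes st_local: "\<And>v x y. (\<And>w. rank w < rank v \<Longrightarrow> x w = y w) \<Longrightarrow> st v x = st v y"
    and h_pushforward: "\<And>s. map_pmf (h s) q = p"
    and finite_rank_le: "\<And>N. finite {w. rank w \<le> N}"
begin

lemma adaptive_map_fun_upd_max:
  assumes "v \<notin> A" and v_max: "\<And>w. w \<in> insert v A \<Longrightarrow> rank w \<le> rank v"
  shows "(\<lambda>u. if u \<in> insert v A then adaptive_map st h (f(v := y)) u else undefined)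
      = (\<lambda>u. if u \<in> A then adaptive_map st h f u else undefined)(v := h (st v f) y)"
proof
  fix u
  have "st w (f(v := y)) = st w f" if "w \<in> insert v A" for w
    using that v_max by (intro st_local) fastforce
  then show "(if u \<in> insert v A then adaptive_map st h (f(v := y)) u else undefined)
      = ((\<lambda>u. if u \<in> A then adaptive_map st h f u else undefined)(v := h (st v f) y)) u"
    using assms(1) by (auto simp: adaptive_map_def)
qed

lemma map_Pi_pmf_adaptive_map:
  assumes "finite L" "\<forall>v\<in>L. \<forall>w. rank w < rank v \<longrightarrow> w \<in> L"
  shows "map_pmf (\<lambda>f v. if v \<in> L then adaptive_map st h f v else undefined) (Pi_pmf L undefined (\<lambda>_. q))
      = Pi_pmf L undefined (\<lambda>_. p)"
  using assms
proof (induction "card L" arbitrary: L)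
  case 0
  then have "L = {}"
    by simp
  then show ?case
    by simp
next
  case (Suc n)
  define Phi where "Phi L f v = (if v \<in> L then adaptive_map st h f v else undefined)" for L f v
  have "L \<noteq> {}"
    using Suc.hyps(2) by auto
  then have "Max (rank ` L) \<in> rank ` L"
    using Suc.prems(1) by (intro Max_in) auto
  then obtain v where v: "v \<in> L" "rank v = Max (rank ` L)"
    by auto
  then have v_max: "rank w \<le> rank v" if "w \<in> L" for w
    using Suc.prems(1) that by simp
  define A where "A = L - {v}"
  have L: "L = insert v A" "v \<notin> A" "finite A" "n = card A"
    using v Suc unfolding A_def by auto
  have "\<forall>u\<in>A. \<forall>w. rank w < rank u \<longrightarrow> w \<in> A"
    using Suc.prems(2) v_max unfolding A_def by fastforce
  then have IH: "map_pmf (Phi A) (Pi_pmf A undefined (\<lambda>_. q)) = Pi_pmf A undefined (\<lambda>_. p)"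
    using Suc.hyps(1)[OF L(4,3)] unfolding Phi_def by blast
  have "map_pmf (Phi L) (Pi_pmf L undefined (\<lambda>_. q))
      = map_pmf (\<lambda>(y, f). (Phi A f)(v := h (st v f) y)) (pair_pmf q (Pi_pmf A undefined (\<lambda>_. q)))"
    unfolding Pi_pmf_insert[OF L(3,2), folded L(1)] pmf.map_comp
    using adaptive_map_fun_upd_max[OF L(2)] v_max unfolding Phi_def L(1)
    by (intro map_pmf_cong) auto
  also have "\<dots> = bind_pmf (Pi_pmf A undefined (\<lambda>_. q))
      (\<lambda>f. map_pmf (\<lambda>z. (Phi A f)(v := z)) (map_pmf (h (st v f)) q))"
    by (simp add: map_pmf_pair_pmf_eq_bind pmf.map_comp o_def)
  also have "\<dots> = bind_pmf (map_pmf (Phi A) (Pi_pmf A undefined (\<lambda>_. q))) (\<lambda>g. map_pmf (\<lambda>z. g(v := z)) p)"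
    by (simp add: h_pushforward bind_map_pmf)
  also have "\<dots> = Pi_pmf L undefined (\<lambda>_. p)"
    unfolding IH Pi_pmf_insert[OF L(3,2), folded L(1)] by (simp add: map_pmf_pair_pmf_eq_bind)
  finally show ?case
    unfolding Phi_def .
qed

lemma measurable_adaptive_map:
  "adaptive_map st h \<in> measurable (PiM UNIV (\<lambda>_. measure_pmf q)) (PiM UNIV (\<lambda>_. measure_pmf p))"
proof (rule measurable_PiM_single')
  fix v :: 'i
  show "(\<lambda>x. adaptive_map st h x v) \<in> measurable (PiM UNIV (\<lambda>_. measure_pmf q)) (measure_pmf p)"
    unfolding measurable_pmf_measure2
  proof (rule measurable_PiM_pmf_finite_dependence[OF finite_rank_le[of "rank v"]])
    fix x y :: "'i \<Rightarrow> 'x"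
    assume "\<And>w. w \<in> {w. rank w \<le> rank v} \<Longrightarrow> x w = y w"
    then show "adaptive_map st h x v = adaptive_map st h y v"
      unfolding adaptive_map_def using st_local[of v x y] by simp
  qed
qed (simp add: space_PiM)

lemma emeasure_adaptive_map_cylinder:
  assumes L: "finite L" "J \<subseteq> L" "\<forall>v\<in>L. \<forall>w. rank w < rank v \<longrightarrow> w \<in> L"
  shows "emeasure (PiM UNIV (\<lambda>_. measure_pmf q))
      (adaptive_map st h -` prod_emb UNIV (\<lambda>_. measure_pmf p) J (PiE J F) \<inter> space (PiM UNIV (\<lambda>_. measure_pmf q)))
    = (\<Prod>j\<in>J. emeasure (measure_pmf p) (F j))"
proof -
  let ?Q = "PiM UNIV (\<lambda>_::'i. measure_pmf q)"
  define Phi where "Phi f v = (if v \<in> L then adaptive_map st h f v else undefined)" for f v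
  define E where "E = {y \<in> space (PiM L (\<lambda>_. measure_pmf q)). \<forall>j\<in>J. Phi y j \<in> F j}"
  define B where "B j = (if j \<in> J then F j else UNIV)" for j
  have E: "E \<in> sets (PiM L (\<lambda>_. measure_pmf q))"
    by (rule sets_PiM_pmf_finite[OF L(1)]) (auto simp: E_def)
  have st_restrict: "st j (restrict x L) = st j x" if "j \<in> L" for j x
    by (rule st_local) (use that L(3) in auto)
  have preimage: "adaptive_map st h -` prod_emb UNIV (\<lambda>_. measure_pmf p) J (PiE J F) \<inter> space ?Q
      = (\<lambda>x. restrict x L) -` E \<inter> space ?Q"
    using L(2) by (auto simp: prod_emb_iff E_def Phi_def adaptive_map_def st_restrict space_PiM PiE_iff)
      (metis subsetD)
  have support: "E \<inter> set_pmf (Pi_pmf L undefined (\<lambda>_. q)) = Phi -` Pi L B \<inter> set_pmf (Pi_pmf L undefined (\<lambda>_. q))"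
    using set_Pi_pmf_subset[OF L(1), of undefined "\<lambda>_. q"] L(2)
    by (auto simp: E_def B_def space_PiM PiE_iff extensional_def Pi_def)
  have "emeasure ?Q (adaptive_map st h -` prod_emb UNIV (\<lambda>_. measure_pmf p) J (PiE J F) \<inter> space ?Q)
      = emeasure (measure_pmf (Pi_pmf L undefined (\<lambda>_. q))) E"
    unfolding preimage by (rule emeasure_PiM_pmf_restrict_preimage[OF L(1) E])
  also have "\<dots> = emeasure (measure_pmf (Pi_pmf L undefined (\<lambda>_. q))) (Phi -` Pi L B)"
    by (subst (1 2) emeasure_Int_set_pmf[symmetric]) (simp only: support)
  also have "\<dots> = emeasure (measure_pmf (map_pmf Phi (Pi_pmf L undefined (\<lambda>_. q)))) (Pi L B)"
    by simp
  also have "map_pmf Phi (Pi_pmf L undefined (\<lambda>_. q)) = Pi_pmf L undefined (\<lambda>_. p)"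
    unfolding Phi_def by (rule map_Pi_pmf_adaptive_map[OF L(1,3)])
  also have "emeasure (measure_pmf (Pi_pmf L undefined (\<lambda>_. p))) (Pi L B)
      = ennreal (\<Prod>j\<in>L. measure_pmf.prob p (B j))"
    by (simp add: measure_pmf.emeasure_eq_measure measure_Pi_pmf_Pi L(1))
  also have "(\<Prod>j\<in>L. measure_pmf.prob p (B j)) = (\<Prod>j\<in>J. measure_pmf.prob p (F j))"
    by (rule prod.mono_neutral_cong_right[OF L(1,2)]) (auto simp: B_def)
  finally show ?thesis
    by (simp add: measure_pmf.emeasure_eq_measure prod_ennreal)
qed

lemma distr_PiM_adaptive_map:
  "distr (PiM UNIV (\<lambda>_. measure_pmf q)) (PiM UNIV (\<lambda>_. measure_pmf p)) (adaptive_map st h)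
     = PiM UNIV (\<lambda>_. measure_pmf p)"
proof -
  interpret product_prob_space "\<lambda>_::'i. measure_pmf p" UNIV
    by (intro product_prob_spaceI) (simp add: measure_pmf.prob_space_axioms)
  show ?thesis
  proof (rule PiM_eq)
    fix J :: "'i set" and F
    assume J: "finite J" "J \<subseteq> UNIV" and F: "\<And>j. j \<in> J \<Longrightarrow> F j \<in> sets (measure_pmf p)"
    define L where "L = {w. rank w \<le> Max (insert 0 (rank ` J))}"
    have L: "finite L" "J \<subseteq> L" "\<forall>v\<in>L. \<forall>w. rank w < rank v \<longrightarrow> w \<in> L"
      using J finite_rank_le unfolding L_def by (auto intro: Max_ge)
    have "emeasure (distr (PiM UNIV (\<lambda>_. measure_pmf q)) (PiM UNIV (\<lambda>_. measure_pmf p)) (adaptive_map st h))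
        (prod_emb UNIV (\<lambda>_. measure_pmf p) J (PiE J F))
      = emeasure (PiM UNIV (\<lambda>_. measure_pmf q))
          (adaptive_map st h -` prod_emb UNIV (\<lambda>_. measure_pmf p) J (PiE J F) \<inter> space (PiM UNIV (\<lambda>_. measure_pmf q)))"
      using J F by (intro emeasure_distr measurable_adaptive_map sets_PiM_I) auto
    then show "emeasure (distr (PiM UNIV (\<lambda>_. measure_pmf q)) (PiM UNIV (\<lambda>_. measure_pmf p)) (adaptive_map st h))
        (prod_emb UNIV (\<lambda>_. measure_pmf p) J (PiE J F)) = (\<Prod>j\<in>J. emeasure (measure_pmf p) (F j))"
      using emeasure_adaptive_map_cylinder[OF L] by simp
  qed simp
qed

end

section \<open>Seeds and recoupling rules\<close>

type_synonym seed = "(bool \<times> bool) \<times> bool \<times> bool \<times> bool \<times> bool \<times> bool"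

definition seed_pmf :: "real \<Rightarrow> real \<Rightarrow> seed pmf" where
  "seed_pmf \<delta>1 \<delta>2 =
     pair_pmf (pair_pmf (bernoulli_pmf \<delta>1) (bernoulli_pmf \<delta>2))
       (pair_pmf (bernoulli_pmf ((\<delta>1 - \<delta>2) / (1 - \<delta>2)))
         (pair_pmf (bernoulli_pmf \<delta>2)
           (pair_pmf (bernoulli_pmf (\<delta>2 / (1 - \<delta>2)))
             (pair_pmf (bernoulli_pmf \<delta>1) (bernoulli_pmf (\<delta>2 / \<delta>1))))))"

text \<open>The two words name the sides from which the second class particles of \<xi> and of \<eta>
  enter a vertex.\<close>

datatype recoupling = Keep | Below_Below | Below_Left | Left_Left

text \<open>Every rule yields a Bernoulli(\<delta>1) \<times> Bernoulli(\<delta>2) pair: b2 \<or> e has parameter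
  \<delta>2 + (1 - \<delta>2) (\<delta>1 - \<delta>2) / (1 - \<delta>2) = \<delta>1, \<not> b2 \<and> f has parameter
  (1 - \<delta>2) \<delta>2 / (1 - \<delta>2) = \<delta>2, and b1 \<and> f' has parameter \<delta>1 \<delta>2 / \<delta>1 = \<delta>2.\<close>

fun eta_coins :: "recoupling \<Rightarrow> seed \<Rightarrow> bool \<times> bool" where
  "eta_coins Keep ((b1, b2), _) = (b1, b2)"
| "eta_coins Below_Below ((b1, b2), e, c, _) = (b2 \<or> e, c)"
| "eta_coins Below_Left ((b1, b2), e, c, f, _) = (b1, \<not> b2 \<and> f)"
| "eta_coins Left_Left ((b1, b2), e, c, f, d, f') = (d, b1 \<and> f')"

lemma map_eta_coins_seed_pmf:
  assumes "0 \<le> \<delta>2" "\<delta>2 < \<delta>1" "\<delta>1 < 1" "\<delta>2 \<le> 1/2"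
  shows "map_pmf (eta_coins k) (seed_pmf \<delta>1 \<delta>2) = pair_pmf (bernoulli_pmf \<delta>1) (bernoulli_pmf \<delta>2)"
proof -
  have probs: "0 \<le> (\<delta>1 - \<delta>2) / (1 - \<delta>2)" "(\<delta>1 - \<delta>2) / (1 - \<delta>2) \<le> 1"
    "0 \<le> \<delta>2 / (1 - \<delta>2)" "\<delta>2 / (1 - \<delta>2) \<le> 1" "0 \<le> \<delta>2 / \<delta>1" "\<delta>2 / \<delta>1 \<le> 1"
    using assms by (auto simp: field_simps)
  show ?thesis
  proof (rule pmf_eqI)
    fix z :: "bool \<times> bool"
    obtain a b where z: "z = (a, b)" by (cases z)
    show "pmf (map_pmf (eta_coins k) (seed_pmf \<delta>1 \<delta>2)) z = pmf (pair_pmf (bernoulli_pmf \<delta>1) (bernoulli_pmf \<delta>2)) z"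
      unfolding seed_pmf_def pair_pmf_def map_bind_pmf bind_assoc_pmf bind_return_pmf map_return_pmf
      unfolding z using assms probs
      by (cases k; cases a; cases b; simp add: pmf_bind pmf_return divide_simps; simp add: algebra_simps)
  qed
qed

lemma eta_coins_Keep: "eta_coins Keep s = fst s"
  by (cases s) auto

section \<open>Second class particles of the basic coupling\<close>

declare s6v_out.simps [simp del]

abbreviation level :: "nat \<times> nat \<Rightarrow> nat" where
  "level v \<equiv> fst v + snd v"

definition edge_head :: "nat \<times> nat \<Rightarrow> bool \<Rightarrow> nat \<times> nat" where
  "edge_head u r = (if r then (fst u + 1, snd u) else (fst u, snd u + 1))"

definition edge_tail :: "nat \<times> nat \<Rightarrow> bool \<Rightarrow> nat \<times> nat" where
  "edge_tail v r = (if r then (fst v - 1, snd v) else (fst v, snd v - 1))"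

text \<open>Edges are addressed by their tail and a direction: r = True is the edge to the right,
  r = False the edge upward.\<close>

definition out_arrow :: "(nat \<times> nat) set \<Rightarrow> (nat \<times> nat \<Rightarrow> bool \<times> bool) \<Rightarrow> nat \<times> nat \<Rightarrow> bool \<Rightarrow> bool" where
  "out_arrow B c u r =
     (if fst u = 0 \<or> snd u = 0 then u \<in> B \<and> (if r then fst u = 0 else snd u = 0)
      else if r then fst (c u) else snd (c u))"

definition in_arrow :: "(nat \<times> nat) set \<Rightarrow> (nat \<times> nat \<Rightarrow> bool \<times> bool) \<Rightarrow> nat \<times> nat \<Rightarrow> bool \<Rightarrow> bool" where
  "in_arrow B \<omega> v r = out_arrow B (s6v_out B \<omega>) (edge_tail v r) r"

definition scp_edge :: "(nat \<times> nat) set \<Rightarrow> (nat \<times> nat \<Rightarrow> bool \<times> bool)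
    \<Rightarrow> (nat \<times> nat) set \<Rightarrow> (nat \<times> nat \<Rightarrow> bool \<times> bool) \<Rightarrow> nat \<times> nat \<Rightarrow> bool \<Rightarrow> bool" where
  "scp_edge B c B' c' u r \<longleftrightarrow> out_arrow B' c' u r \<and> \<not> out_arrow B c u r"

lemma level_edge_head [simp]: "level (edge_head u r) = Suc (level u)"
  by (simp add: edge_head_def)

lemma edge_head_eq_iff:
  assumes "1 \<le> fst v" "1 \<le> snd v"
  shows "edge_head u r = v \<longleftrightarrow> u = edge_tail v r"
  using assms by (cases u; cases v) (auto simp: edge_head_def edge_tail_def)

lemma edge_head_interior:
  assumes "out_arrow B c u r" "B \<subseteq> boundary_vertices"
  shows "1 \<le> fst (edge_head u r) \<and> 1 \<le> snd (edge_head u r)"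
  using assms by (cases u) (auto simp: out_arrow_def edge_head_def boundary_vertices_def split: if_splits)

lemma s6v_edges_eq: "s6v_edges B c = {(u, edge_head u r) | u r. out_arrow B c u r}"
  by (auto simp: s6v_edges_def out_arrow_def edge_head_def split: if_splits)

lemma edge_head_eq_edge_head_iff [simp]: "edge_head u r = edge_head u s \<longleftrightarrow> r = s"
  by (auto simp: edge_head_def)

lemma mem_scp_edges_iff:
  "e \<in> s6v_edges B' c' - s6v_edges B c \<longleftrightarrow> (\<exists>u r. e = (u, edge_head u r) \<and> scp_edge B c B' c' u r)"
  unfolding s6v_edges_eq scp_edge_def by auto

lemma scp_vertices_eq:
  "scp_vertices B c B' c' = {v. \<exists>u r. scp_edge B c B' c' u r \<and> (v = u \<or> v = edge_head u r)}"
  unfolding scp_vertices_def by (simp only: mem_scp_edges_iff Bex_def) (metis fst_conv snd_conv)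

lemma out_arrow_interior:
  "1 \<le> fst u \<Longrightarrow> 1 \<le> snd u \<Longrightarrow> out_arrow B c u r = (if r then fst (c u) else snd (c u))"
  by (simp add: out_arrow_def)

lemma out_arrow_boundary:
  "fst u = 0 \<or> snd u = 0 \<Longrightarrow> out_arrow B c u r \<longleftrightarrow> u \<in> B \<and> (if r then fst u = 0 else snd u = 0)"
  by (simp add: out_arrow_def)

lemma out_arrow_cong:
  "(1 \<le> fst u \<Longrightarrow> 1 \<le> snd u \<Longrightarrow> c u = c' u) \<Longrightarrow> out_arrow B c u r = out_arrow B c' u r"
  by (simp add: out_arrow_def)

lemma out_arrow_mono:
  assumes "B \<subseteq> B'" "c u \<le> c' u" "out_arrow B c u r"
  shows "out_arrow B' c' u r"
proof (cases "fst u = 0 \<or> snd u = 0")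
  case True
  then show ?thesis using assms(1,3) by (auto simp: out_arrow_boundary)
next
  case False
  then show ?thesis using assms(2,3) by (auto simp: out_arrow_interior less_eq_prod_def)
qed

lemma s6v_out_boundary: "fst v = 0 \<or> snd v = 0 \<Longrightarrow> s6v_out B \<omega> v = (False, False)"
  by (cases v) (simp only:, subst s6v_out.simps, simp)

lemma s6v_out_interior:
  assumes "1 \<le> fst v" "1 \<le> snd v"
  shows "s6v_out B \<omega> v = s6v_rule (\<omega> v) (in_arrow B \<omega> v True) (in_arrow B \<omega> v False)"
  using assms
  by (cases v) (simp only:, subst s6v_out.simps, simp add: in_arrow_def out_arrow_def edge_tail_def)

lemma level_edge_tail_less:
  "1 \<le> fst (edge_tail v r) \<Longrightarrow> 1 \<le> snd (edge_tail v r) \<Longrightarrow> level (edge_tail v r) < level v"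
  by (auto simp: edge_tail_def split: if_splits)

lemma out_arrow_edge_tail_cong:
  "(\<And>u. level u < level v \<Longrightarrow> c u = c' u) \<Longrightarrow> out_arrow B c (edge_tail v r) r = out_arrow B c' (edge_tail v r) r"
  using level_edge_tail_less[of v r] by (intro out_arrow_cong) auto

lemma s6v_out_local:
  "(\<And>w. level w \<le> level v \<Longrightarrow> \<omega> w = \<omega>' w) \<Longrightarrow> s6v_out B \<omega> v = s6v_out B \<omega>' v"
proof (induction "level v" arbitrary: v rule: less_induct)
  case less
  show ?case
  proof (cases "fst v = 0 \<or> snd v = 0")
    case True
    then show ?thesis by (simp add: s6v_out_boundary)
  next
    case False
    have "in_arrow B \<omega> v r = in_arrow B \<omega>' v r" for r
      unfolding in_arrow_def
      by (intro out_arrow_cong less.hyps less.prems) (use level_edge_tail_less[of v r] in auto)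
    then show ?thesis
      using False less.prems by (simp add: s6v_out_interior)
  qed
qed

lemma in_arrow_local:
  assumes "\<And>w. level w < level v \<Longrightarrow> \<omega> w = \<omega>' w"
  shows "in_arrow B \<omega> v r = in_arrow B \<omega>' v r"
  unfolding in_arrow_def
  by (intro out_arrow_cong s6v_out_local assms) (use level_edge_tail_less[of v r] in auto)

lemma s6v_rule_mono: "(l \<longrightarrow> l') \<Longrightarrow> (d \<longrightarrow> d') \<Longrightarrow> s6v_rule w l d \<le> s6v_rule w l' d'"
  by (cases w) (auto simp: less_eq_prod_def)

lemma s6v_out_mono: "B \<subseteq> B' \<Longrightarrow> s6v_out B \<omega> v \<le> s6v_out B' \<omega> v"
proof (induction "level v" arbitrary: v rule: less_induct)
  case less
  show ?case
  proof (cases "fst v = 0 \<or> snd v = 0")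
    case True
    then show ?thesis by (simp add: s6v_out_boundary)
  next
    case False
    have "s6v_out B \<omega> (edge_tail v r) \<le> s6v_out B' \<omega> (edge_tail v r)" for r
      using less level_edge_tail_less[of v r] by (cases "fst (edge_tail v r) = 0 \<or> snd (edge_tail v r) = 0")
        (auto simp: s6v_out_boundary)
    then have "in_arrow B \<omega> v r \<longrightarrow> in_arrow B' \<omega> v r" for r
      unfolding in_arrow_def using less.prems by (blast intro: out_arrow_mono)
    then show ?thesis
      using False by (simp add: s6v_out_interior s6v_rule_mono)
  qed
qed

lemma in_arrow_mono: "B \<subseteq> B' \<Longrightarrow> in_arrow B \<omega> v r \<Longrightarrow> in_arrow B' \<omega> v r"
  unfolding in_arrow_def by (blast intro: out_arrow_mono s6v_out_mono)

lemma s6v_rule_discrepancy: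
  assumes "l \<longrightarrow> l'" "d \<longrightarrow> d'"
  shows "(fst (s6v_rule w l' d') \<and> \<not> fst (s6v_rule w l d)) \<or> (snd (s6v_rule w l' d') \<and> \<not> snd (s6v_rule w l d))
         \<longleftrightarrow> (l' \<and> \<not> l) \<or> (d' \<and> \<not> d)"
    and "(l' \<and> \<not> l) \<noteq> (d' \<and> \<not> d) \<Longrightarrow>
         \<not> ((fst (s6v_rule w l' d') \<and> \<not> fst (s6v_rule w l d)) \<and> (snd (s6v_rule w l' d') \<and> \<not> snd (s6v_rule w l d)))"
  using assms by (cases w; auto)+

locale s6v_pair =
  fixes B :: "(nat \<times> nat) set" and \<omega> :: "nat \<times> nat \<Rightarrow> bool \<times> bool" and v0 :: "nat \<times> nat"
  assumes boundary_config: "B \<subseteq> boundary_vertices"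
    and v0_boundary: "v0 \<in> boundary_vertices"
    and v0_notin: "v0 \<notin> B"
begin

abbreviation scp :: "nat \<times> nat \<Rightarrow> bool \<Rightarrow> bool" where
  "scp u r \<equiv> scp_edge B (s6v_out B \<omega>) (insert v0 B) (s6v_out (insert v0 B) \<omega>) u r"

lemma scp_boundary:
  "fst u = 0 \<or> snd u = 0 \<Longrightarrow> scp u r \<longleftrightarrow> u = v0 \<and> (if r then fst u = 0 else snd u = 0)"
  using v0_notin by (auto simp: scp_edge_def out_arrow_boundary)

lemma scp_in_iff: "scp (edge_tail v r) r \<longleftrightarrow> in_arrow (insert v0 B) \<omega> v r \<and> \<not> in_arrow B \<omega> v r"
  by (simp add: scp_edge_def in_arrow_def)

lemma scp_out_interior_iff:
  assumes "1 \<le> fst u" "1 \<le> snd u"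
  shows "scp u True \<longleftrightarrow> fst (s6v_out (insert v0 B) \<omega> u) \<and> \<not> fst (s6v_out B \<omega> u)"
    and "scp u False \<longleftrightarrow> snd (s6v_out (insert v0 B) \<omega> u) \<and> \<not> snd (s6v_out B \<omega> u)"
  using assms by (simp_all add: scp_edge_def out_arrow_interior)

lemma scp_interior:
  assumes "1 \<le> fst u" "1 \<le> snd u"
  shows scp_interior_out_iff_in: "(\<exists>r. scp u r) \<longleftrightarrow> (\<exists>r. scp (edge_tail u r) r)"
    and "scp (edge_tail u True) True \<noteq> scp (edge_tail u False) False \<Longrightarrow> \<not> (scp u True \<and> scp u False)"
proof -
  let ?l = "in_arrow B \<omega> u True" and ?d = "in_arrow B \<omega> u False"
  let ?l' = "in_arrow (insert v0 B) \<omega> u True" and ?d' = "in_arrow (insert v0 B) \<omega> u False"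
  have mono: "?l \<longrightarrow> ?l'" "?d \<longrightarrow> ?d'"
    by (auto intro: in_arrow_mono)
  have out: "scp u True \<longleftrightarrow> fst (s6v_rule (\<omega> u) ?l' ?d') \<and> \<not> fst (s6v_rule (\<omega> u) ?l ?d)"
    "scp u False \<longleftrightarrow> snd (s6v_rule (\<omega> u) ?l' ?d') \<and> \<not> snd (s6v_rule (\<omega> u) ?l ?d)"
    using assms by (simp_all add: scp_out_interior_iff s6v_out_interior)
  have "scp (edge_tail u True) True \<longleftrightarrow> ?l' \<and> \<not> ?l" "scp (edge_tail u False) False \<longleftrightarrow> ?d' \<and> \<not> ?d"
    by (simp_all add: scp_in_iff)
  note local = this out s6v_rule_discrepancy[OF mono, of "\<omega> u"]
  show "(\<exists>r. scp u r) \<longleftrightarrow> (\<exists>r. scp (edge_tail u r) r)"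
    using local by (auto simp: ex_bool_eq)
  show "scp (edge_tail u True) True \<noteq> scp (edge_tail u False) False \<Longrightarrow> \<not> (scp u True \<and> scp u False)"
    using local by blast
qed

lemma scp_out_iff: "(\<exists>r. scp u r) \<longleftrightarrow> u = v0 \<or> (\<exists>p r. scp p r \<and> edge_head p r = u)"
proof (cases "fst u = 0 \<or> snd u = 0")
  case True
  have "insert v0 B \<subseteq> boundary_vertices"
    using boundary_config v0_boundary by simp
  then have "\<not> (scp p r \<and> edge_head p r = u)" for p r
    using True edge_head_interior[of "insert v0 B" _ p r] by (auto simp: scp_edge_def)
  moreover have "fst v0 = 0 \<or> snd v0 = 0"
    using v0_boundary by (auto simp: boundary_vertices_def)
  ultimately show ?thesis
    using True scp_boundary by (metis (full_types))
next
  case False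
  then have interior: "1 \<le> fst u" "1 \<le> snd u"
    by auto
  have "u \<noteq> v0"
    using False v0_boundary by (auto simp: boundary_vertices_def)
  moreover have "(\<exists>p r. scp p r \<and> edge_head p r = u) \<longleftrightarrow> (\<exists>r. scp (edge_tail u r) r)"
    by (simp only: edge_head_eq_iff[OF interior]) blast
  ultimately show ?thesis
    using scp_interior_out_iff_in[OF interior] by blast
qed

lemma scp_level_ge_v0: "scp u r \<Longrightarrow> level v0 \<le> level u"
proof (induction "level u" arbitrary: u r rule: less_induct)
  case less
  then consider "u = v0" | p r' where "scp p r'" "edge_head p r' = u"
    using scp_out_iff by blast
  then show ?case
  proof cases
    case 2
    then have "level v0 \<le> level p"
      using less.hyps by fastforce
    then show ?thesis
      using 2 by auto
  qed simp
qed

lemma scp_at_level_v0: "scp u r \<Longrightarrow> level u = level v0 \<Longrightarrow> u = v0"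
  using scp_out_iff scp_level_ge_v0 by (metis Suc_n_not_le_n level_edge_head)

lemma scp_v0_single: "scp v0 r \<Longrightarrow> scp v0 s \<Longrightarrow> r = s"
  using v0_boundary scp_boundary[of v0] by (auto simp: boundary_vertices_def split: if_splits)

lemma scp_unique: "level u = level w \<Longrightarrow> scp u r \<Longrightarrow> scp w s \<Longrightarrow> u = w \<and> r = s"
proof (induction "level u" arbitrary: u w r s rule: less_induct)
  case less
  show ?case
  proof (cases "u = v0 \<or> w = v0")
    case True
    then have "u = v0 \<and> w = v0"
      using less.prems scp_at_level_v0 by metis
    then show ?thesis
      using less.prems scp_v0_single by blast
  next
    case False
    obtain p r' where p: "scp p r'" "edge_head p r' = u"
      using False less.prems(2) scp_out_iff[of u] by blast
    obtain q s' where q: "scp q s'" "edge_head q s' = w"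
      using False less.prems(3) scp_out_iff[of w] by blast
    have "p = q \<and> r' = s'"
      using less.prems(1) p q by (intro less.hyps[of p]) auto
    then have "u = w"
      using p q by simp
    moreover have "r = s"
    proof (rule ccontr)
      assume "r \<noteq> s"
      then have both: "scp u True \<and> scp u False"
        using less.prems \<open>u = w\<close> by (cases r) auto
      have interior: "1 \<le> fst u" "1 \<le> snd u"
        using p edge_head_interior[of "insert v0 B" _ p r'] boundary_config v0_boundary
        by (auto simp: scp_edge_def)
      then have "scp (edge_tail u True) True \<and> scp (edge_tail u False) False"
        using both scp_interior[OF interior] by (auto simp: ex_bool_eq)
      moreover have "level (edge_tail u True) = level (edge_tail u False)"
        "level (edge_tail u False) < level u" "edge_tail u True \<noteq> edge_tail u False"
        using interior by (auto simp: edge_tail_def)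
      ultimately show False
        using less.hyps[of "edge_tail u True" "edge_tail u False" True False] by auto
    qed
    ultimately show ?thesis ..
  qed
qed

lemma scp_in_unique:
  assumes "1 \<le> fst u" "1 \<le> snd u" "scp u r"
  shows "scp (edge_tail u True) True \<noteq> scp (edge_tail u False) False"
proof -
  have "\<not> (scp (edge_tail u True) True \<and> scp (edge_tail u False) False)"
    using assms scp_unique[of "edge_tail u True" "edge_tail u False" True False]
    by (auto simp: edge_tail_def)
  moreover have "scp (edge_tail u True) True \<or> scp (edge_tail u False) False"
    using assms(3) scp_interior_out_iff_in[OF assms(1,2)] by (cases r) (auto simp: ex_bool_eq)
  ultimately show ?thesis
    by blast
qed

lemma mem_scp_vertices_iff:
  "u \<in> scp_vertices B (s6v_out B \<omega>) (insert v0 B) (s6v_out (insert v0 B) \<omega>) \<longleftrightarrow> (\<exists>r. scp u r)"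
  unfolding scp_vertices_eq using scp_out_iff by blast

end

section \<open>Two coupled pairs\<close>

definition choose_recoupling :: "bool \<Rightarrow> bool \<Rightarrow> bool \<Rightarrow> bool \<Rightarrow> bool \<Rightarrow> bool \<Rightarrow> bool \<Rightarrow> bool \<Rightarrow> recoupling" where
  "choose_recoupling lX dX lX' dX' lE dE lE' dE' =
     (if dX' \<and> \<not> dX \<and> dE' \<and> \<not> dE \<and> lX \<and> \<not> lE then Below_Below
      else if dX' \<and> \<not> dX \<and> lE' \<and> \<not> lE then Below_Left
      else if lX' \<and> \<not> lX \<and> lE' \<and> \<not> lE \<and> dX \<and> \<not> dE then Left_Left
      else Keep)"

lemma eta_rule_le:
  fixes z :: seed
  assumes "lE \<longrightarrow> lX" "dE \<longrightarrow> dX" "lE' \<longrightarrow> lX'" "dE' \<longrightarrow> dX'"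
    and "lX \<longrightarrow> lX'" "dX \<longrightarrow> dX'" "lE \<longrightarrow> lE'" "dE \<longrightarrow> dE'"
  defines "w \<equiv> eta_coins (choose_recoupling lX dX lX' dX' lE dE lE' dE') z"
  shows "s6v_rule w lE dE \<le> s6v_rule (fst z) lX dX \<and> s6v_rule w lE' dE' \<le> s6v_rule (fst z) lX' dX'"
proof -
  obtain b1 b2 e c f d f' where z: "z = ((b1, b2), e, c, f, d, f')"
    by (cases z) auto
  show ?thesis
    using assms unfolding z
    by (cases lX; cases dX; cases lX'; cases dX'; cases lE; cases dE; cases lE'; cases dE')
       (simp_all add: less_eq_prod_def choose_recoupling_def)
qed

lemma eta_rule_no_crossing:
  fixes z :: seed
  assumes "lE \<longrightarrow> lX" "dE \<longrightarrow> dX" "lE' \<longrightarrow> lX'" "dE' \<longrightarrow> dX'"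
    and "lX \<longrightarrow> lX'" "dX \<longrightarrow> dX'" "lE \<longrightarrow> lE'" "dE \<longrightarrow> dE'"
    and "(lX' \<and> \<not> lX) \<noteq> (dX' \<and> \<not> dX)" "(lE' \<and> \<not> lE) \<noteq> (dE' \<and> \<not> dE)"
    and "\<not> ((lX' \<and> \<not> lX) \<and> (dE' \<and> \<not> dE))"
  defines "w \<equiv> eta_coins (choose_recoupling lX dX lX' dX' lE dE lE' dE') z"
  shows "\<not> ((snd (s6v_rule (fst z) lX' dX') \<and> \<not> snd (s6v_rule (fst z) lX dX)) \<and>
            (fst (s6v_rule w lE' dE') \<and> \<not> fst (s6v_rule w lE dE)))"
proof -
  obtain b1 b2 e c f d f' where z: "z = ((b1, b2), e, c, f, d, f')"
    by (cases z) auto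
  show ?thesis
    using assms unfolding z
    by (cases lX; cases dX; cases lX'; cases dX'; cases lE; cases dE; cases lE'; cases dE')
       (simp_all add: choose_recoupling_def)
qed

definition eta_recoupling :: "(nat \<times> nat) set \<Rightarrow> (nat \<times> nat \<Rightarrow> bool \<times> bool)
    \<Rightarrow> (nat \<times> nat) set \<Rightarrow> (nat \<times> nat \<Rightarrow> bool \<times> bool) \<Rightarrow> nat \<times> nat \<Rightarrow> nat \<times> nat \<Rightarrow> recoupling" where
  "eta_recoupling BX \<omega>X BE \<omega>E v0 v =
     choose_recoupling (in_arrow BX \<omega>X v True) (in_arrow BX \<omega>X v False)
       (in_arrow (insert v0 BX) \<omega>X v True) (in_arrow (insert v0 BX) \<omega>X v False)
       (in_arrow BE \<omega>E v True) (in_arrow BE \<omega>E v False)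
       (in_arrow (insert v0 BE) \<omega>E v True) (in_arrow (insert v0 BE) \<omega>E v False)"

locale s6v_coupled = X: s6v_pair BX \<omega>X v0 + E: s6v_pair BE \<omega>E v0
  for BX \<omega>X BE \<omega>E v0 +
  fixes z :: "nat \<times> nat \<Rightarrow> seed"
  assumes xi_coins: "\<omega>X v = fst (z v)"
    and eta_coins_eq: "\<omega>E v = eta_coins (eta_recoupling BX \<omega>X BE \<omega>E v0 v) (z v)"
    and eta_boundary_le: "BE \<subseteq> BX"
begin

lemma eta_boundary_insert_le: "insert v0 BE \<subseteq> insert v0 BX"
  using eta_boundary_le by blast

lemma eta_le_xi:
  "s6v_out BE \<omega>E v \<le> s6v_out BX \<omega>X v \<and> s6v_out (insert v0 BE) \<omega>E v \<le> s6v_out (insert v0 BX) \<omega>X v"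
proof (induction "level v" arbitrary: v rule: less_induct)
  case less
  show ?case
  proof (cases "fst v = 0 \<or> snd v = 0")
    case True
    then show ?thesis by (simp add: s6v_out_boundary)
  next
    case False
    then have interior: "1 \<le> fst v" "1 \<le> snd v"
      by auto
    have "s6v_out BE \<omega>E (edge_tail v r) \<le> s6v_out BX \<omega>X (edge_tail v r) \<and>
        s6v_out (insert v0 BE) \<omega>E (edge_tail v r) \<le> s6v_out (insert v0 BX) \<omega>X (edge_tail v r)" for r
      using less level_edge_tail_less[of v r]
      by (cases "fst (edge_tail v r) = 0 \<or> snd (edge_tail v r) = 0") (auto simp: s6v_out_boundary)
    then have "(in_arrow BE \<omega>E v r \<longrightarrow> in_arrow BX \<omega>X v r) \<and>
        (in_arrow (insert v0 BE) \<omega>E v r \<longrightarrow> in_arrow (insert v0 BX) \<omega>X v r)" for r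
      unfolding in_arrow_def using out_arrow_mono[OF eta_boundary_le] out_arrow_mono[OF eta_boundary_insert_le]
      by blast
    moreover have "in_arrow BX \<omega>X v r \<longrightarrow> in_arrow (insert v0 BX) \<omega>X v r"
      "in_arrow BE \<omega>E v r \<longrightarrow> in_arrow (insert v0 BE) \<omega>E v r" for r
      by (auto intro: in_arrow_mono)
    ultimately show ?thesis
      unfolding s6v_out_interior[OF interior] xi_coins[of v] eta_coins_eq[of v] eta_recoupling_def
      by (intro eta_rule_le) auto
  qed
qed

lemma in_arrow_eta_le_xi:
  "in_arrow BE \<omega>E v r \<Longrightarrow> in_arrow BX \<omega>X v r"
  "in_arrow (insert v0 BE) \<omega>E v r \<Longrightarrow> in_arrow (insert v0 BX) \<omega>X v r"
  unfolding in_arrow_def using eta_le_xi out_arrow_mono[OF eta_boundary_le] out_arrow_mono[OF eta_boundary_insert_le]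
  by blast+

text \<open>If the particle of \<xi> entered from the left and that of \<eta> from below, the order
  would already fail one antidiagonal earlier; the other cases are ruled out by the recoupling.\<close>

lemma no_up_right:
  assumes up: "X.scp p False" and right: "E.scp p True"
    and ordered_before: "\<And>a b r s. Suc (level a) = level p \<Longrightarrow> Suc (level b) = level p \<Longrightarrow>
      X.scp a r \<Longrightarrow> E.scp b s \<Longrightarrow> fst b \<le> fst a"
  shows False
proof -
  have "\<not> (fst p = 0 \<or> snd p = 0)"
  proof
    assume "fst p = 0 \<or> snd p = 0"
    then have "p = v0" "fst p = 0" "snd p = 0"
      using up right X.scp_boundary[of p False] E.scp_boundary[of p True] by auto
    then show False
      using X.v0_boundary by (auto simp: boundary_vertices_def)
  qed
  then have interior: "1 \<le> fst p" "1 \<le> snd p"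
    by auto
  have in_X: "X.scp (edge_tail p True) True \<noteq> X.scp (edge_tail p False) False"
    using X.scp_in_unique[OF interior up] .
  have in_E: "E.scp (edge_tail p True) True \<noteq> E.scp (edge_tail p False) False"
    using E.scp_in_unique[OF interior right] .
  have not_left_below: "\<not> (X.scp (edge_tail p True) True \<and> E.scp (edge_tail p False) False)"
  proof
    assume "X.scp (edge_tail p True) True \<and> E.scp (edge_tail p False) False"
    then have "fst (edge_tail p False) \<le> fst (edge_tail p True)"
      using interior by (intro ordered_before) (auto simp: edge_tail_def)
    then show False
      using interior by (simp add: edge_tail_def)
  qed
  have "\<not> (X.scp p False \<and> E.scp p True)"
    using in_X in_E not_left_below
    unfolding X.scp_out_interior_iff[OF interior] E.scp_out_interior_iff[OF interior]
      s6v_out_interior[OF interior] xi_coins[of p] eta_coins_eq[of p] eta_recoupling_def X.scp_in_iff E.scp_in_iff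
    by (intro eta_rule_no_crossing) (auto intro: in_arrow_mono in_arrow_eta_le_xi)
  then show False
    using up right by blast
qed

lemma scp_order: "level p = level q \<Longrightarrow> X.scp p r \<Longrightarrow> E.scp q s \<Longrightarrow> fst q \<le> fst p"
proof (induction "level p" arbitrary: p q r s rule: less_induct)
  case less
  show ?case
  proof (cases "p = v0 \<or> q = v0")
    case True
    then have "p = v0 \<and> q = v0"
      using less.prems X.scp_at_level_v0 E.scp_at_level_v0 by metis
    then show ?thesis
      by simp
  next
    case False
    obtain p' r' where p': "X.scp p' r'" "edge_head p' r' = p"
      using False less.prems(2) X.scp_out_iff[of p] by blast
    obtain q' s' where q': "E.scp q' s'" "edge_head q' s' = q"
      using False less.prems(3) E.scp_out_iff[of q] by blast
    have levels: "level p' = level q'" "level p' < level p"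
      using p'(2) q'(2) less.prems(1) by auto
    have "fst q' \<le> fst p'"
      using less.hyps levels p'(1) q'(1) by blast
    moreover have "\<not> (p' = q' \<and> \<not> r' \<and> s')"
    proof
      assume "p' = q' \<and> \<not> r' \<and> s'"
      then show False
        using p'(1) q'(1) levels by (intro no_up_right[of p']) (auto intro: less.hyps)
    qed
    ultimately show ?thesis
      using p'(2) q'(2) levels(1) by (cases p'; cases q'; cases r'; cases s') (auto simp: edge_head_def)
  qed
qed

lemma scp_vertices_order:
  assumes "p \<in> scp_vertices BX (s6v_out BX \<omega>X) (insert v0 BX) (s6v_out (insert v0 BX) \<omega>X)"
    and "q \<in> scp_vertices BE (s6v_out BE \<omega>E) (insert v0 BE) (s6v_out (insert v0 BE) \<omega>E)"
    and "level p = level q"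
  shows "fst q \<le> fst p"
  using assms X.mem_scp_vertices_iff E.mem_scp_vertices_iff scp_order by blast

end

section \<open>The coupling\<close>

text \<open>The coins of \<eta> at a vertex depend on the configurations of \<eta> at earlier vertices,
  so the \<eta>-pair is computed by recursion over antidiagonals together with its coins.\<close>

function eta_out :: "(nat \<times> nat) set \<Rightarrow> (nat \<times> nat) set \<Rightarrow> nat \<times> nat \<Rightarrow> (nat \<times> nat \<Rightarrow> seed)
    \<Rightarrow> nat \<times> nat \<Rightarrow> (bool \<times> bool) \<times> (bool \<times> bool)" where
  "eta_out BX BE v0 z (i, j) =
     (if i = 0 \<or> j = 0 then ((False, False), (False, False)) else
      let \<omega>X = (\<lambda>v. fst (z v));
          lE = (if i = 1 then (0, j) \<in> BE else fst (fst (eta_out BX BE v0 z (i - 1, j))));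
          dE = (if j = 1 then (i, 0) \<in> BE else snd (fst (eta_out BX BE v0 z (i, j - 1))));
          lE' = (if i = 1 then (0, j) \<in> insert v0 BE else fst (snd (eta_out BX BE v0 z (i - 1, j))));
          dE' = (if j = 1 then (i, 0) \<in> insert v0 BE else snd (snd (eta_out BX BE v0 z (i, j - 1))));
          w = eta_coins (choose_recoupling (in_arrow BX \<omega>X (i, j) True) (in_arrow BX \<omega>X (i, j) False)
                (in_arrow (insert v0 BX) \<omega>X (i, j) True) (in_arrow (insert v0 BX) \<omega>X (i, j) False)
                lE dE lE' dE') (z (i, j))
      in (s6v_rule w lE dE, s6v_rule w lE' dE'))"
  by pat_completeness auto
termination
  by (relation "Wellfounded.measure (\<lambda>(_, _, _, _, v). level v)") auto

declare eta_out.simps [simp del]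

definition coupled_recoupling :: "(nat \<times> nat) set \<Rightarrow> (nat \<times> nat) set \<Rightarrow> nat \<times> nat
    \<Rightarrow> nat \<times> nat \<Rightarrow> (nat \<times> nat \<Rightarrow> seed) \<Rightarrow> recoupling" where
  "coupled_recoupling BX BE v0 v z =
     choose_recoupling (in_arrow BX (\<lambda>v. fst (z v)) v True) (in_arrow BX (\<lambda>v. fst (z v)) v False)
       (in_arrow (insert v0 BX) (\<lambda>v. fst (z v)) v True) (in_arrow (insert v0 BX) (\<lambda>v. fst (z v)) v False)
       (out_arrow BE (\<lambda>w. fst (eta_out BX BE v0 z w)) (edge_tail v True) True)
       (out_arrow BE (\<lambda>w. fst (eta_out BX BE v0 z w)) (edge_tail v False) False)
       (out_arrow (insert v0 BE) (\<lambda>w. snd (eta_out BX BE v0 z w)) (edge_tail v True) True)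
       (out_arrow (insert v0 BE) (\<lambda>w. snd (eta_out BX BE v0 z w)) (edge_tail v False) False)"

definition eta_field :: "(nat \<times> nat) set \<Rightarrow> (nat \<times> nat) set \<Rightarrow> nat \<times> nat
    \<Rightarrow> (nat \<times> nat \<Rightarrow> seed) \<Rightarrow> nat \<times> nat \<Rightarrow> bool \<times> bool" where
  "eta_field BX BE v0 = adaptive_map (coupled_recoupling BX BE v0) eta_coins"

lemma eta_out_boundary: "fst v = 0 \<or> snd v = 0 \<Longrightarrow> eta_out BX BE v0 z v = ((False, False), (False, False))"
  by (cases v) (simp only:, subst eta_out.simps, simp)

lemma eta_out_interior:
  assumes "1 \<le> fst v" "1 \<le> snd v"
  shows "eta_out BX BE v0 z v =
    (s6v_rule (eta_field BX BE v0 z v) (out_arrow BE (\<lambda>w. fst (eta_out BX BE v0 z w)) (edge_tail v True) True)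
                (out_arrow BE (\<lambda>w. fst (eta_out BX BE v0 z w)) (edge_tail v False) False),
     s6v_rule (eta_field BX BE v0 z v) (out_arrow (insert v0 BE) (\<lambda>w. snd (eta_out BX BE v0 z w)) (edge_tail v True) True)
                (out_arrow (insert v0 BE) (\<lambda>w. snd (eta_out BX BE v0 z w)) (edge_tail v False) False))"
  using assms
  by (cases v) (simp only:, subst eta_out.simps,
      simp add: eta_field_def adaptive_map_def coupled_recoupling_def out_arrow_def edge_tail_def Let_def)

lemma coupled_recoupling_cong:
  assumes "\<And>w. level w < level v \<Longrightarrow> z w = z' w"
    and "\<And>u. level u < level v \<Longrightarrow> eta_out BX BE v0 z u = eta_out BX BE v0 z' u"
  shows "coupled_recoupling BX BE v0 v z = coupled_recoupling BX BE v0 v z'"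
proof -
  have "in_arrow B (\<lambda>v. fst (z v)) v r = in_arrow B (\<lambda>v. fst (z' v)) v r" for B r
    using assms(1) by (intro in_arrow_local) simp
  moreover have "out_arrow B (\<lambda>w. f (eta_out BX BE v0 z w)) (edge_tail v r) r
      = out_arrow B (\<lambda>w. f (eta_out BX BE v0 z' w)) (edge_tail v r) r" for B f r
    using assms(2) by (intro out_arrow_edge_tail_cong) simp
  ultimately show ?thesis
    unfolding coupled_recoupling_def by simp
qed

lemma eta_out_local:
  "(\<And>w. level w \<le> level v \<Longrightarrow> z w = z' w) \<Longrightarrow> eta_out BX BE v0 z v = eta_out BX BE v0 z' v"
proof (induction "level v" arbitrary: v rule: less_induct)
  case less
  show ?case
  proof (cases "fst v = 0 \<or> snd v = 0")
    case True
    then show ?thesis by (simp add: eta_out_boundary)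
  next
    case False
    then have interior: "1 \<le> fst v" "1 \<le> snd v"
      by auto
    have below: "eta_out BX BE v0 z u = eta_out BX BE v0 z' u" if "level u < level v" for u
      using that less by auto
    then have "coupled_recoupling BX BE v0 v z = coupled_recoupling BX BE v0 v z'"
      using less.prems by (intro coupled_recoupling_cong) auto
    moreover have "z v = z' v"
      using less.prems by simp
    moreover have "out_arrow B (\<lambda>w. f (eta_out BX BE v0 z w)) (edge_tail v r) r
        = out_arrow B (\<lambda>w. f (eta_out BX BE v0 z' w)) (edge_tail v r) r" for B f r
      using below by (intro out_arrow_edge_tail_cong) simp
    ultimately show ?thesis
      unfolding eta_out_interior[OF interior] eta_field_def adaptive_map_def by simp
  qed
qed

lemma coupled_recoupling_local:
  "(\<And>w. level w < level v \<Longrightarrow> z w = z' w) \<Longrightarrow> coupled_recoupling BX BE v0 v z = coupled_recoupling BX BE v0 v z'"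
  by (intro coupled_recoupling_cong eta_out_local) auto

lemma s6v_out_eta_field:
  "s6v_out BE (eta_field BX BE v0 z) v = fst (eta_out BX BE v0 z v) \<and>
   s6v_out (insert v0 BE) (eta_field BX BE v0 z) v = snd (eta_out BX BE v0 z v)"
proof (induction "level v" arbitrary: v rule: less_induct)
  case less
  show ?case
  proof (cases "fst v = 0 \<or> snd v = 0")
    case True
    then show ?thesis by (simp add: s6v_out_boundary eta_out_boundary)
  next
    case False
    then have interior: "1 \<le> fst v" "1 \<le> snd v"
      by auto
    have "in_arrow BE (eta_field BX BE v0 z) v r = out_arrow BE (\<lambda>w. fst (eta_out BX BE v0 z w)) (edge_tail v r) r"
      "in_arrow (insert v0 BE) (eta_field BX BE v0 z) v r
         = out_arrow (insert v0 BE) (\<lambda>w. snd (eta_out BX BE v0 z w)) (edge_tail v r) r" for r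
      unfolding in_arrow_def
      by (rule out_arrow_cong, use less.hyps[of "edge_tail v r"] level_edge_tail_less[of v r] in fastforce)+
    then show ?thesis
      by (simp add: s6v_out_interior[OF interior] eta_out_interior[OF interior])
  qed
qed

lemma s6v_coupled_eta_field:
  assumes "BX \<subseteq> boundary_vertices" "BE \<subseteq> BX" "v0 \<in> boundary_vertices" "v0 \<notin> BX"
  shows "s6v_coupled BX (\<lambda>v. fst (z v)) BE (eta_field BX BE v0 z) v0 z"
proof unfold_locales
  have "in_arrow BE (eta_field BX BE v0 z) v r = out_arrow BE (\<lambda>w. fst (eta_out BX BE v0 z w)) (edge_tail v r) r"
    "in_arrow (insert v0 BE) (eta_field BX BE v0 z) v r
       = out_arrow (insert v0 BE) (\<lambda>w. snd (eta_out BX BE v0 z w)) (edge_tail v r) r" for v r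
    unfolding in_arrow_def by (rule out_arrow_cong, use s6v_out_eta_field in fastforce)+
  then show "eta_field BX BE v0 z v
      = eta_coins (eta_recoupling BX (\<lambda>v. fst (z v)) BE (eta_field BX BE v0 z) v0 v) (z v)" for v
    by (simp add: eta_field_def adaptive_map_def coupled_recoupling_def eta_recoupling_def)
qed (use assms in auto)

lemma finite_level_le: "finite {w :: nat \<times> nat. level w \<le> N}"
  by (rule finite_subset[of _ "{0..N} \<times> {0..N}"]) auto

lemma measurable_s6v_out:
  "s6v_out B \<in> measurable (PiM UNIV (\<lambda>_. measure_pmf (p :: (bool \<times> bool) pmf))) cfg_space"
  unfolding cfg_space_def
proof (rule measurable_PiM_single')
  fix v :: "nat \<times> nat"
  show "(\<lambda>\<omega>. s6v_out B \<omega> v) \<in> measurable (PiM UNIV (\<lambda>_. measure_pmf p)) (count_space UNIV)"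
    by (rule measurable_PiM_pmf_finite_dependence[OF finite_level_le[of "level v"]])
      (rule s6v_out_local, auto)
qed (simp add: space_PiM)

lemma pred_scp_edge:
  assumes "g \<in> measurable M (cfg_space \<Otimes>\<^sub>M cfg_space)"
  shows "Measurable.pred M (\<lambda>x. scp_edge B (fst (g x)) B' (snd (g x)) u r)"
proof -
  have component: "(\<lambda>c. c u) \<in> measurable cfg_space (count_space UNIV)"
    unfolding cfg_space_def by (rule measurable_component_singleton) simp
  have "scp_edge B c B' c' u r \<longleftrightarrow> (\<exists>a a'. c u = a \<and> c' u = a' \<and> scp_edge B (\<lambda>_. a) B' (\<lambda>_. a') u r)"
    for c c'
    by (simp add: scp_edge_def out_arrow_def)
  moreover have "Measurable.pred M
      (\<lambda>x. \<exists>a a'. fst (g x) u = a \<and> snd (g x) u = a' \<and> scp_edge B (\<lambda>_. a) B' (\<lambda>_. a') u r)"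
    using assms component by measurable
  ultimately show ?thesis
    by simp
qed

lemma pred_mem_scp_vertices:
  assumes "g \<in> measurable M (cfg_space \<Otimes>\<^sub>M cfg_space)"
  shows "Measurable.pred M (\<lambda>x. p \<in> scp_vertices B (fst (g x)) B' (snd (g x)))"
  unfolding scp_vertices_eq mem_Collect_eq using pred_scp_edge[OF assms] by measurable

lemma basic_coupling_eq_distr:
  assumes "\<phi> \<in> measurable M (rand_space \<delta>1 \<delta>2)" "distr M (rand_space \<delta>1 \<delta>2) \<phi> = rand_space \<delta>1 \<delta>2"
  shows "distr M (cfg_space \<Otimes>\<^sub>M cfg_space) (\<lambda>x. (s6v_out B (\<phi> x), s6v_out B' (\<phi> x)))
    = basic_coupling \<delta>1 \<delta>2 B B'"
proof -
  have "(\<lambda>\<omega>. (s6v_out B \<omega>, s6v_out B' \<omega>)) \<in> measurable (rand_space \<delta>1 \<delta>2) (cfg_space \<Otimes>\<^sub>M cfg_space)"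
    unfolding rand_space_def by (intro measurable_Pair measurable_s6v_out)
  then have "distr (distr M (rand_space \<delta>1 \<delta>2) \<phi>) (cfg_space \<Otimes>\<^sub>M cfg_space) (\<lambda>\<omega>. (s6v_out B \<omega>, s6v_out B' \<omega>))
      = distr M (cfg_space \<Otimes>\<^sub>M cfg_space) (\<lambda>x. (s6v_out B (\<phi> x), s6v_out B' (\<phi> x)))"
    using assms(1) by (subst distr_distr) (simp_all add: o_def)
  then show ?thesis
    unfolding basic_coupling_def assms(2) by simp
qed

definition seed_space :: "real \<Rightarrow> real \<Rightarrow> (nat \<times> nat \<Rightarrow> seed) measure" where
  "seed_space \<delta>1 \<delta>2 = PiM UNIV (\<lambda>_. measure_pmf (seed_pmf \<delta>1 \<delta>2))"

lemma seed_field_law: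
  assumes "0 \<le> \<delta>2" "\<delta>2 < \<delta>1" "\<delta>1 < 1" "\<delta>2 \<le> 1/2"
    and st_local: "\<And>v z z'. (\<And>w. level w < level v \<Longrightarrow> z w = z' w) \<Longrightarrow> st v z = st v z'"
  shows "adaptive_map st eta_coins \<in> measurable (seed_space \<delta>1 \<delta>2) (rand_space \<delta>1 \<delta>2)"
    and "distr (seed_space \<delta>1 \<delta>2) (rand_space \<delta>1 \<delta>2) (adaptive_map st eta_coins) = rand_space \<delta>1 \<delta>2"
proof -
  interpret adaptive_resampling level st eta_coins "seed_pmf \<delta>1 \<delta>2"
      "pair_pmf (bernoulli_pmf \<delta>1) (bernoulli_pmf \<delta>2)"
  proof
    show "st v z = st v z'" if "\<And>w. level w < level v \<Longrightarrow> z w = z' w" for v z z'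
      using st_local that .
    show "map_pmf (eta_coins k) (seed_pmf \<delta>1 \<delta>2) = pair_pmf (bernoulli_pmf \<delta>1) (bernoulli_pmf \<delta>2)" for k
      using assms(1-4) by (rule map_eta_coins_seed_pmf)
  qed (rule finite_level_le)
  show "adaptive_map st eta_coins \<in> measurable (seed_space \<delta>1 \<delta>2) (rand_space \<delta>1 \<delta>2)"
    unfolding seed_space_def rand_space_def by (rule measurable_adaptive_map)
  show "distr (seed_space \<delta>1 \<delta>2) (rand_space \<delta>1 \<delta>2) (adaptive_map st eta_coins) = rand_space \<delta>1 \<delta>2"
    unfolding seed_space_def rand_space_def by (rule distr_PiM_adaptive_map)
qed

definition coupled_configs :: "(nat \<times> nat) set \<Rightarrow> (nat \<times> nat) set \<Rightarrow> nat \<times> nat \<Rightarrow> (nat \<times> nat \<Rightarrow> seed)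
    \<Rightarrow> ((nat \<times> nat \<Rightarrow> bool \<times> bool) \<times> (nat \<times> nat \<Rightarrow> bool \<times> bool))
      \<times> ((nat \<times> nat \<Rightarrow> bool \<times> bool) \<times> (nat \<times> nat \<Rightarrow> bool \<times> bool))" where
  "coupled_configs BX BE v0 z =
     ((s6v_out BX (\<lambda>v. fst (z v)), s6v_out (insert v0 BX) (\<lambda>v. fst (z v))),
      (s6v_out BE (eta_field BX BE v0 z), s6v_out (insert v0 BE) (eta_field BX BE v0 z)))"

lemma coupled_configs_law:
  assumes "0 \<le> \<delta>2" "\<delta>2 < \<delta>1" "\<delta>1 < 1" "\<delta>2 \<le> 1/2"
  shows "coupled_configs BX BE v0
      \<in> measurable (seed_space \<delta>1 \<delta>2) ((cfg_space \<Otimes>\<^sub>M cfg_space) \<Otimes>\<^sub>M (cfg_space \<Otimes>\<^sub>M cfg_space))"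
    and "distr (seed_space \<delta>1 \<delta>2) (cfg_space \<Otimes>\<^sub>M cfg_space) (\<lambda>z. fst (coupled_configs BX BE v0 z))
      = basic_coupling \<delta>1 \<delta>2 BX (insert v0 BX)"
    and "distr (seed_space \<delta>1 \<delta>2) (cfg_space \<Otimes>\<^sub>M cfg_space) (\<lambda>z. snd (coupled_configs BX BE v0 z))
      = basic_coupling \<delta>1 \<delta>2 BE (insert v0 BE)"
proof -
  have Keep: "adaptive_map (\<lambda>_ _. Keep) eta_coins = (\<lambda>z v. fst (z v))"
    by (simp add: fun_eq_iff adaptive_map_def eta_coins_Keep)
  have xi: "(\<lambda>z v. fst (z v)) \<in> measurable (seed_space \<delta>1 \<delta>2) (rand_space \<delta>1 \<delta>2)"
      "distr (seed_space \<delta>1 \<delta>2) (rand_space \<delta>1 \<delta>2) (\<lambda>z v. fst (z v)) = rand_space \<delta>1 \<delta>2"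
    using seed_field_law[OF assms, where st = "\<lambda>_ _. Keep"] unfolding Keep by simp_all
  have eta: "eta_field BX BE v0 \<in> measurable (seed_space \<delta>1 \<delta>2) (rand_space \<delta>1 \<delta>2)"
      "distr (seed_space \<delta>1 \<delta>2) (rand_space \<delta>1 \<delta>2) (eta_field BX BE v0) = rand_space \<delta>1 \<delta>2"
    unfolding eta_field_def
    using seed_field_law[OF assms, where st = "coupled_recoupling BX BE v0", OF coupled_recoupling_local]
    by blast+
  show "coupled_configs BX BE v0
      \<in> measurable (seed_space \<delta>1 \<delta>2) ((cfg_space \<Otimes>\<^sub>M cfg_space) \<Otimes>\<^sub>M (cfg_space \<Otimes>\<^sub>M cfg_space))"
    using xi(1) eta(1) unfolding coupled_configs_def rand_space_def
    by (intro measurable_Pair measurable_compose[OF _ measurable_s6v_out]) auto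
  show "distr (seed_space \<delta>1 \<delta>2) (cfg_space \<Otimes>\<^sub>M cfg_space) (\<lambda>z. fst (coupled_configs BX BE v0 z))
      = basic_coupling \<delta>1 \<delta>2 BX (insert v0 BX)"
    unfolding coupled_configs_def fst_conv by (rule basic_coupling_eq_distr[OF xi])
  show "distr (seed_space \<delta>1 \<delta>2) (cfg_space \<Otimes>\<^sub>M cfg_space) (\<lambda>z. snd (coupled_configs BX BE v0 z))
      = basic_coupling \<delta>1 \<delta>2 BE (insert v0 BE)"
    unfolding coupled_configs_def snd_conv by (rule basic_coupling_eq_distr[OF eta])
qed

theorem proposition4p1:
  fixes \<delta>1 \<delta>2 :: real and Bxi Beta :: "(nat \<times> nat) set" and v0 :: "nat \<times> nat"
  assumes "0 \<le> \<delta>2" and "\<delta>2 < \<delta>1" and "\<delta>1 < 1" and "\<delta>2 \<le> 1/2"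
    and "boundary_config Bxi" and "boundary_config Beta" and "Beta \<subseteq> Bxi"
    and "v0 \<in> boundary_vertices" and "v0 \<notin> Bxi" and "v0 \<notin> Beta"
  shows "\<exists>\<mu>. prob_space \<mu>
    \<and> sets \<mu> = sets ((cfg_space \<Otimes>\<^sub>M cfg_space) \<Otimes>\<^sub>M (cfg_space \<Otimes>\<^sub>M cfg_space))
    \<and> distr \<mu> (cfg_space \<Otimes>\<^sub>M cfg_space) fst = basic_coupling \<delta>1 \<delta>2 Bxi (insert v0 Bxi)
    \<and> distr \<mu> (cfg_space \<Otimes>\<^sub>M cfg_space) snd = basic_coupling \<delta>1 \<delta>2 Beta (insert v0 Beta)
    \<and> (AE x in \<mu>. \<forall>n p q.
          p \<in> scp_vertices Bxi (fst (fst x)) (insert v0 Bxi) (snd (fst x))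
        \<and> q \<in> scp_vertices Beta (fst (snd x)) (insert v0 Beta) (snd (snd x))
        \<and> fst p + snd p = n \<and> fst q + snd q = n
        \<longrightarrow> fst q \<le> fst p)"
proof -
  let ?C = "cfg_space \<Otimes>\<^sub>M cfg_space" and ?F = "coupled_configs Bxi Beta v0"
  note law = coupled_configs_law[OF assms(1-4), of Bxi Beta v0]
  have ordered: "fst q \<le> fst p"
    if "p \<in> scp_vertices Bxi (fst (fst (?F z))) (insert v0 Bxi) (snd (fst (?F z)))"
      "q \<in> scp_vertices Beta (fst (snd (?F z))) (insert v0 Beta) (snd (snd (?F z)))"
      "level p = level q" for p q z
    using s6v_coupled.scp_vertices_order[OF s6v_coupled_eta_field] assms(5-9) that
    unfolding coupled_configs_def boundary_config_def by auto
  show ?thesis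
  proof (intro exI[of _ "distr (seed_space \<delta>1 \<delta>2) (?C \<Otimes>\<^sub>M ?C) ?F"] conjI)
    show "prob_space (distr (seed_space \<delta>1 \<delta>2) (?C \<Otimes>\<^sub>M ?C) ?F)"
      using law(1) unfolding seed_space_def
      by (intro prob_space.prob_space_distr prob_space_PiM measure_pmf.prob_space_axioms)
    show "distr (distr (seed_space \<delta>1 \<delta>2) (?C \<Otimes>\<^sub>M ?C) ?F) ?C fst = basic_coupling \<delta>1 \<delta>2 Bxi (insert v0 Bxi)"
      using law(1,2) by (subst distr_distr) (simp_all add: o_def)
    show "distr (distr (seed_space \<delta>1 \<delta>2) (?C \<Otimes>\<^sub>M ?C) ?F) ?C snd = basic_coupling \<delta>1 \<delta>2 Beta (insert v0 Beta)"
      using law(1,3) by (subst distr_distr) (simp_all add: o_def)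
    show "AE x in distr (seed_space \<delta>1 \<delta>2) (?C \<Otimes>\<^sub>M ?C) ?F. \<forall>n p q.
          p \<in> scp_vertices Bxi (fst (fst x)) (insert v0 Bxi) (snd (fst x))
        \<and> q \<in> scp_vertices Beta (fst (snd x)) (insert v0 Beta) (snd (snd x))
        \<and> fst p + snd p = n \<and> fst q + snd q = n \<longrightarrow> fst q \<le> fst p" (is "AE x in _. ?P x")
    proof -
      have "Measurable.pred (?C \<Otimes>\<^sub>M ?C) ?P"
        using pred_mem_scp_vertices[OF measurable_fst] pred_mem_scp_vertices[OF measurable_snd] by measurable
      moreover have "?P (?F z)" for z
        using ordered by auto
      ultimately show ?thesis
        by (subst AE_distr_iff[OF law(1)]) (simp_all add: pred_def)
    qed
  qed simp
qed

end
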